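(* Let $d,m_0,n,m$ be nonnegative integers with $n\ge1$, $m\ge1$. Then $\mathcal{L}(d,m_0,n,m)$ is a quasi-homogeneous $(-1)$-class if and only if $(d,m_0,n,m)$ is one of: (a) $(2,0,5,1)$ or $(1,1,1,1)$; (b) $(e,e-1,2e,1)$ with $e\ge1$; (c) $\left(\frac{x+y+3m}{2},\frac{x-y+m}{2},\frac{x+2y-1}{m}+4,m\right)$ for some $m\ge2$ and integers $x,y\ge1$ with $xy=(m-1)(2m+1)$, $x+m\ge y$, $x-y\equiv m\pmod 2$, and $m\mid x+2y-1$.
   Context: $\mathcal{L}(d,m_0,n,m)$ denotes the class (linear system) of plane curves of degree $d$ with multiplicity $m_0$ at a general point $p_0$ and $m$ at general points $p_1,\dots,p_n$. Its self-intersection is $\mathcal{L}^2=d^2-m_0^2-nm^2$ and its genus $g$ is defined by $2g-2=d(d-3)-m_0(m_0-1)-nm(m-1)$. A quasi-homogeneous $(-1)$-class is such an $\mathcal{L}(d,m_0,n,m)$ with $\mathcal{L}^2=-1$ and $g=0$ (equivalently $d^2-m_0^2-nm^2=-1$ and $3d-m_0-nm=1$). *)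

theory Defs
  imports "HOL-Number_Theory.Cong"
begin

text \<open>The class L(d,m0,n,m): degree d, multiplicity m0 at p0, m at p1..pn.\<close>

definition self_intersection :: "int \<Rightarrow> int \<Rightarrow> int \<Rightarrow> int \<Rightarrow> int" where
  "self_intersection d m0 n m = d^2 - m0^2 - n * m^2"

definition two_genus_minus_two :: "int \<Rightarrow> int \<Rightarrow> int \<Rightarrow> int \<Rightarrow> int" where
  "two_genus_minus_two d m0 n m = d * (d - 3) - m0 * (m0 - 1) - n * m * (m - 1)"

definition quasi_hom_minus_one_class :: "int \<Rightarrow> int \<Rightarrow> int \<Rightarrow> int \<Rightarrow> bool" where
  "quasi_hom_minus_one_class d m0 n m \<longleftrightarrow>
     self_intersection d m0 n m = -1 \<and> two_genus_minus_two d m0 n m = -2"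

end

theory Submission
  imports Defs
begin

text \<open>
  Given \<open>L\<^sup>2 = -1\<close>, the genus condition is the linear equation \<open>n m = 3 d - m\<^sub>0 - 1\<close>.
  For \<open>m = 1\<close>, eliminating \<open>n\<close> leaves \<open>(d - m\<^sub>0 - 1) (d + m\<^sub>0 - 2) = 0\<close>.
  For \<open>m \<ge> 2\<close>, the substitution \<open>x = d + m\<^sub>0 - 2 m\<close>, \<open>y = d - m\<^sub>0 - m\<close> turns the two
  equations into \<open>x y = (m - 1) (2 m + 1)\<close> and \<open>x + 2 y - 1 = (n - 4) m\<close>, and the conditions
  of (c) just record that \<open>d, m\<^sub>0, n\<close> can be recovered as integers with \<open>m\<^sub>0 \<ge> 0\<close>.
  The factors \<open>x, y\<close> cannot both be negative: then \<open>n \<ge> 1\<close> gives \<open>-x - 2 y \<le> 3 m - 1\<close>,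
  whereas AM-GM gives \<open>(x + 2 y)\<^sup>2 \<ge> 8 x y > (3 m - 1)\<^sup>2\<close>.
\<close>

lemma quasi_hom_minus_one_class_iff:
  "quasi_hom_minus_one_class d m0 n m \<longleftrightarrow>
     d\<^sup>2 - m0\<^sup>2 - n * m\<^sup>2 = -1 \<and> n * m = 3 * d - m0 - 1"
  unfolding quasi_hom_minus_one_class_def self_intersection_def two_genus_minus_two_def
  by (auto simp: algebra_simps power2_eq_square)

lemma minus_one_class_unit_multiplicity_iff:
  fixes d m0 n :: int
  assumes "d \<ge> 0" and "m0 \<ge> 0" and "n \<ge> 1"
  shows "d\<^sup>2 - m0\<^sup>2 - n = -1 \<and> n = 3 * d - m0 - 1 \<longleftrightarrow>
    (d, m0, n) = (2, 0, 5) \<or> (d, m0, n) = (1, 1, 1) \<or>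
    (\<exists>e \<ge> 1. (d, m0, n) = (e, e - 1, 2 * e))"
proof
  assume eqs: "d\<^sup>2 - m0\<^sup>2 - n = -1 \<and> n = 3 * d - m0 - 1"
  then have "(d - m0 - 1) * (d + m0 - 2) = 0"
    by (simp add: algebra_simps power2_eq_square)
  then consider "m0 = d - 1" | "d + m0 = 2"
    by fastforce
  then show "(d, m0, n) = (2, 0, 5) \<or> (d, m0, n) = (1, 1, 1) \<or>
    (\<exists>e \<ge> 1. (d, m0, n) = (e, e - 1, 2 * e))"
  proof cases
    case 1
    then have "d \<ge> 1" and "n = 2 * d"
      using eqs assms(2) by linarith+
    then show ?thesis
      using 1 by auto
  next
    case 2
    then have "d = 1 \<or> d = 2"
      using eqs assms by arith
    then show ?thesis
      using 2 eqs by auto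
  qed
next
  assume "(d, m0, n) = (2, 0, 5) \<or> (d, m0, n) = (1, 1, 1) \<or>
    (\<exists>e \<ge> 1. (d, m0, n) = (e, e - 1, 2 * e))"
  then show "d\<^sup>2 - m0\<^sup>2 - n = -1 \<and> n = 3 * d - m0 - 1"
    by (auto simp: algebra_simps power2_eq_square)
qed

lemma minus_one_class_change_of_variables:
  fixes d m0 n m x y :: int
  assumes "x = d + m0 - 2 * m" and "y = d - m0 - m"
  shows "d\<^sup>2 - m0\<^sup>2 - n * m\<^sup>2 = -1 \<and> n * m = 3 * d - m0 - 1 \<longleftrightarrow>
    x * y = (m - 1) * (2 * m + 1) \<and> x + 2 * y - 1 = (n - 4) * m"
    (is "?old \<longleftrightarrow> ?new")
proof -
  define q where "q = d\<^sup>2 - m0\<^sup>2 - n * m\<^sup>2 + 1"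
  define l where "l = n * m - (3 * d - m0 - 1)"
  have "?old \<longleftrightarrow> q = 0 \<and> l = 0"
    unfolding q_def l_def by auto
  moreover have "x * y - (m - 1) * (2 * m + 1) = q + m * l"
    unfolding assms q_def l_def by (simp add: algebra_simps power2_eq_square)
  moreover have "x + 2 * y - 1 - (n - 4) * m = - l"
    unfolding assms l_def by (simp add: algebra_simps)
  ultimately show ?thesis
    by auto
qed

lemma three_m_minus_one_less_abs_sum:
  fixes a b m :: int
  assumes "m \<ge> 2" and "a * b = (m - 1) * (2 * m + 1)"
  shows "3 * m - 1 < \<bar>a + 2 * b\<bar>"
proof -
  have "8 * ((m - 1) * (2 * m + 1)) - (3 * m - 1)\<^sup>2 = (7 * m - 9) * (m + 1)"
    by (simp add: algebra_simps power2_eq_square)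
  moreover have "(7 * m - 9) * (m + 1) > 0"
    using assms(1) by simp
  ultimately have "(3 * m - 1)\<^sup>2 < 8 * (a * b)"
    using assms(2) by linarith
  also have "8 * (a * b) \<le> (a + 2 * b)\<^sup>2"
    using zero_le_power2 [of "a - 2 * b"] by (simp add: algebra_simps power2_eq_square)
  finally have "\<not> \<bar>a + 2 * b\<bar> \<le> \<bar>3 * m - 1\<bar>"
    by (simp add: abs_le_square_iff)
  then show ?thesis
    by linarith
qed

lemma minus_one_class_factors_positive:
  fixes n m x y :: int
  assumes "m \<ge> 2" and "n \<ge> 1"
    and "x * y = (m - 1) * (2 * m + 1)" and "x + 2 * y - 1 = (n - 4) * m"
  shows "x \<ge> 1 \<and> y \<ge> 1"
proof -
  have "x * y > 0"
    using assms(1,3) by simp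
  then have same_sign: "x > 0 \<and> y > 0 \<or> x < 0 \<and> y < 0"
    by (auto simp: zero_less_mult_iff)
  have "(-3) * m \<le> (n - 4) * m"
    using assms(1,2) by (intro mult_right_mono) auto
  then have "x + 2 * y \<ge> 1 - 3 * m"
    using assms(4) by linarith
  moreover have "3 * m - 1 < \<bar>x + 2 * y\<bar>"
    using three_m_minus_one_less_abs_sum assms(1,3) .
  ultimately show ?thesis
    using same_sign by linarith
qed

lemma minus_one_class_multiplicity_ge_two_iff:
  fixes d m0 n m :: int
  assumes "m \<ge> 2" and "m0 \<ge> 0" and "n \<ge> 1"
  shows "d\<^sup>2 - m0\<^sup>2 - n * m\<^sup>2 = -1 \<and> n * m = 3 * d - m0 - 1 \<longleftrightarrow>
    (\<exists>x y. x \<ge> 1 \<and> y \<ge> 1 \<and> x * y = (m - 1) * (2 * m + 1) \<and> x + m \<ge> y \<and>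
       [x - y = m] (mod 2) \<and> m dvd (x + 2 * y - 1) \<and>
       d = (x + y + 3 * m) div 2 \<and> m0 = (x - y + m) div 2 \<and>
       n = (x + 2 * y - 1) div m + 4)"
    (is "?eqs \<longleftrightarrow> (\<exists>x y. ?solution x y)")
proof
  assume ?eqs
  define x where "x = d + m0 - 2 * m"
  define y where "y = d - m0 - m"
  have xy: "x * y = (m - 1) * (2 * m + 1)" and lin: "x + 2 * y - 1 = (n - 4) * m"
    using minus_one_class_change_of_variables [OF x_def y_def] \<open>?eqs\<close> by blast+
  have parity: "x - y - m = 2 * (m0 - m)"
    unfolding x_def y_def by simp
  have "[x - y = m] (mod 2)"
    unfolding cong_iff_dvd_diff parity by simp
  moreover have "(x + 2 * y - 1) div m = n - 4"
    using lin assms(1) by simp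
  ultimately have "?solution x y"
    using minus_one_class_factors_positive [OF assms(1,3) xy lin] xy lin assms(2)
    unfolding x_def y_def by auto
  then show "\<exists>x y. ?solution x y"
    by blast
next
  assume "\<exists>x y. ?solution x y"
  then obtain x y where "?solution x y"
    by blast
  then have xy: "x * y = (m - 1) * (2 * m + 1)"
    and "even (x - y - m)" and "m dvd (x + 2 * y - 1)"
    and d: "d = (x + y + 3 * m) div 2" and m0: "m0 = (x - y + m) div 2"
    and n: "n = (x + 2 * y - 1) div m + 4"
    by (auto simp: cong_iff_dvd_diff)
  have "x + y + 3 * m = (x - y - m) + 2 * (y + 2 * m)"
    and "x - y + m = (x - y - m) + 2 * m"
    by simp_all
  then have "even (x + y + 3 * m)" and "even (x - y + m)"
    using \<open>even (x - y - m)\<close> by presburger+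
  then have "2 * d = x + y + 3 * m" and "2 * m0 = x - y + m"
    unfolding d m0 by simp_all
  then have "x = d + m0 - 2 * m" and "y = d - m0 - m"
    by linarith+
  moreover have "x + 2 * y - 1 = (n - 4) * m"
    unfolding n using \<open>m dvd (x + 2 * y - 1)\<close> by simp
  ultimately show ?eqs
    using minus_one_class_change_of_variables xy by blast
qed

theorem proposition5p1:
  fixes d m0 n m :: int
  assumes "d \<ge> 0" and "m0 \<ge> 0" and "n \<ge> 1" and "m \<ge> 1"
  shows "quasi_hom_minus_one_class d m0 n m \<longleftrightarrow>
    ((d, m0, n, m) = (2, 0, 5, 1) \<or> (d, m0, n, m) = (1, 1, 1, 1)
     \<or> (\<exists>e::int. e \<ge> 1 \<and> (d, m0, n, m) = (e, e - 1, 2 * e, 1))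
     \<or> (\<exists>x y :: int. m \<ge> 2 \<and> x \<ge> 1 \<and> y \<ge> 1 \<and>
          x * y = (m - 1) * (2 * m + 1) \<and> x + m \<ge> y \<and>
          [x - y = m] (mod 2) \<and> m dvd (x + 2 * y - 1) \<and>
          d = (x + y + 3 * m) div 2 \<and> m0 = (x - y + m) div 2 \<and>
          n = (x + 2 * y - 1) div m + 4))"
proof (cases "m = 1")
  case True
  then show ?thesis
    using minus_one_class_unit_multiplicity_iff [OF assms(1-3)]
    by (auto simp: quasi_hom_minus_one_class_iff)
next
  case False
  then have "m \<ge> 2"
    using assms(4) by simp
  then show ?thesis
    using minus_one_class_multiplicity_ge_two_iff [OF _ assms(2,3)]
    by (auto simp: quasi_hom_minus_one_class_iff)
qed

end
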